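(* For every $n\geq 1$, the Fibonacci-sum set-graph $G^F_{A^{(n)}}$ is Hamiltonian.
   Context: Let $\mathcal{F}=\{f_m\}_{m\ge 0}$ be the Fibonacci numbers, $f_0=0$, $f_1=1$, $f_m=f_{m-1}+f_{m-2}$. For $n\in\mathbb{N}$ let $A^{(n)}=\{1,2,\dots,n\}$. The Fibonacci-sum set-graph $G^F_{A^{(n)}}$ is the multigraph (loops and multiple edges allowed) whose vertices are in bijection with the nonempty subsets of $A^{(n)}$; between the vertices corresponding to distinct subsets $S,T$ there is one edge for each pair $(i',j')$ with $i'\in S$, $j'\in T$, $i'\neq j'$ and $i'+j'\in\mathcal{F}$, and at the vertex corresponding to $S$ there is one loop for each pair of distinct elements $i',j'\in S$ with $i'+j'\in\mathcal{F}$. *)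

theory Defs
  imports Main "HOL-Number_Theory.Fib"
begin

definition fib_numbers :: "nat set" where
  "fib_numbers = range fib"

definition fsg_vertices :: "nat \<Rightarrow> nat set set" where
  "fsg_vertices n = {S. S \<subseteq> {1..n} \<and> S \<noteq> {}}"

definition fsg_edge_mult :: "nat set \<Rightarrow> nat set \<Rightarrow> nat" where
  "fsg_edge_mult S T = card {(i, j). i \<in> S \<and> j \<in> T \<and> i \<noteq> j \<and> i + j \<in> fib_numbers}"

text \<open>Number of loops at S: one for each (unordered) pair of distinct elements of S with
  Fibonacci sum. Loops are irrelevant for Hamiltonicity; recorded for completeness.\<close>
definition fsg_loops :: "nat set \<Rightarrow> nat" where
  "fsg_loops S = card {{i, j} | i j. i \<in> S \<and> j \<in> S \<and> i \<noteq> j \<and> i + j \<in> fib_numbers}"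

text \<open>A cycle of length k \<ge> 3
  needs an edge between cyclically consecutive vertices; a cycle on 2 vertices uses two
  distinct parallel edges; the one-vertex graph is Hamiltonian by convention (trivial cycle).\<close>
definition hamiltonian_multigraph :: "'v set \<Rightarrow> ('v \<Rightarrow> 'v \<Rightarrow> nat) \<Rightarrow> bool" where
  "hamiltonian_multigraph V m \<longleftrightarrow>
     (\<exists>vs. distinct vs \<and> set vs = V \<and>
        (length vs = 1 \<or>
         (length vs = 2 \<and> m (vs ! 0) (vs ! 1) \<ge> 2) \<or>
         (length vs \<ge> 3 \<and> (\<forall>i < length vs. m (vs ! i) (vs ! ((i + 1) mod length vs)) \<ge> 1))))"

end

theory Submission
  imports Defs
begin

text \<open>Induction on \<open>n\<close>, starting from the triangle \<open>{1}, {2}, {1, 2}\<close> for \<open>n = 2\<close>.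
  Given a Hamiltonian cycle \<open>W\<close> on the nonempty subsets of \<open>{1..n}\<close>, pick \<open>p \<le> n\<close> with
  \<open>p + (n + 1)\<close> a Fibonacci number (the least Fibonacci number above \<open>n + 1\<close> is below
  \<open>2(n + 1)\<close>). More than half of the vertices contain \<open>p\<close>, so two cyclically consecutive ones
  do; rotate \<open>W\<close> so that they become its last and first vertex. Then \<open>W\<close>, followed by
  \<open>{n + 1}\<close>, followed by \<open>W\<close> with \<open>n + 1\<close> added to every vertex, is a Hamiltonian cycle on
  the nonempty subsets of \<open>{1..n + 1}\<close>: the three joints use the pair \<open>p, n + 1\<close>, and adding
  elements to vertices preserves adjacency.\<close>

definition cyclic_path :: "('a \<Rightarrow> 'a \<Rightarrow> bool) \<Rightarrow> 'a list \<Rightarrow> bool" where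
  "cyclic_path R vs \<longleftrightarrow> vs \<noteq> [] \<and> successively R vs \<and> R (last vs) (hd vs)"

lemma cyclic_path_rotate1:
  assumes "cyclic_path R vs"
  shows "cyclic_path R (rotate1 vs)"
proof (cases vs)
  case (Cons x xs)
  show ?thesis
  proof (cases "xs = []")
    case False
    have "successively R xs" "R (last xs) x" "R x (hd xs)"
      using assms False unfolding cyclic_path_def Cons by (auto simp: successively_Cons)
    then show ?thesis
      using False unfolding cyclic_path_def Cons by (auto simp: successively_append_iff)
  qed (use assms Cons in simp)
qed (use assms in \<open>simp add: cyclic_path_def\<close>)

lemma cyclic_path_rotate: "cyclic_path R vs \<Longrightarrow> cyclic_path R (rotate k vs)"
  by (induction k) (simp_all add: cyclic_path_rotate1)

lemma hamiltonian_multigraph_if_cyclic_path: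
  assumes vs: "cyclic_path R vs" "distinct vs" "3 \<le> length vs"
    and R_mult: "\<And>x y. x \<in> set vs \<Longrightarrow> y \<in> set vs \<Longrightarrow> R x y \<Longrightarrow> 1 \<le> m x y"
  shows "hamiltonian_multigraph (set vs) m"
proof -
  have R_next: "R (vs ! i) (vs ! ((i + 1) mod length vs))" if i: "i < length vs" for i
  proof (cases "Suc i < length vs")
    case True
    then show ?thesis using successively_nth[of R vs i] vs(1) by (simp add: cyclic_path_def)
  next
    case False
    then have "i + 1 = length vs" using i by simp
    then have "i = length vs - 1" "(i + 1) mod length vs = 0" by simp_all
    then show ?thesis using vs(1) unfolding cyclic_path_def by (metis hd_conv_nth last_conv_nth)
  qed
  have "1 \<le> m (vs ! i) (vs ! ((i + 1) mod length vs))" if "i < length vs" for i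
    using that by (intro R_mult nth_mem R_next mod_less_divisor) auto
  then show ?thesis unfolding hamiltonian_multigraph_def using vs(2,3) by blast
qed

lemma length_filter_no_adjacent:
  assumes "successively (\<lambda>a b. \<not> (Q a \<and> Q b)) xs"
  shows "2 * length (filter Q xs) \<le> length xs + (if xs \<noteq> [] \<and> Q (hd xs) then 1 else 0)"
  using assms
proof (induction xs rule: induct_list012)
  case (3 x y zs)
  then show ?case by (auto split: if_splits)
qed auto

lemma not_successively_split:
  "\<not> successively R xs \<Longrightarrow> \<exists>ys a b zs. xs = ys @ a # b # zs \<and> \<not> R a b"
proof (induction R xs rule: successively.induct)
  case (3 R x y xs)
  show ?case
  proof (cases "R x y")
    case True
    then obtain ys a b zs where "y # xs = ys @ a # b # zs" "\<not> R a b" using 3 by auto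
    then show ?thesis by (intro exI[of _ "x # ys"]) auto
  qed (intro exI[of _ "[]"], auto)
qed auto

lemma adjacent_pair_if_majority:
  assumes "length xs < 2 * length (filter Q xs)"
  obtains "Q (hd xs)" "Q (last xs)"
  | ys a b zs where "xs = ys @ a # b # zs" "Q a" "Q b"
proof (cases "successively (\<lambda>a b. \<not> (Q a \<and> Q b)) xs")
  case True
  have "successively (\<lambda>a b. \<not> (Q a \<and> Q b)) (rev xs)"
    using True by (simp, rule successively_mono) auto
  then have "Q (hd xs) \<and> Q (last xs)"
    using length_filter_no_adjacent[OF True] length_filter_no_adjacent[of Q "rev xs"] assms
    by (auto simp: rev_filter[symmetric] hd_rev split: if_splits)
  then show thesis using that(1) by blast
next
  case False
  then show thesis using that(2) not_successively_split by blast
qed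

lemma cyclic_path_rotation_ends:
  assumes "cyclic_path R vs" "length vs < 2 * length (filter Q vs)"
  obtains k where "cyclic_path R (rotate k vs)" "Q (hd (rotate k vs))" "Q (last (rotate k vs))"
  using assms(2)
proof (cases rule: adjacent_pair_if_majority)
  case 1
  then show thesis using that[of 0] assms(1) by simp
next
  case (2 ys a b zs)
  define k where "k = length (ys @ [a])"
  have rot: "rotate k vs = (b # zs) @ ys @ [a]"
    unfolding k_def 2(1) using rotate_append[of "ys @ [a]" "b # zs"] by simp
  show thesis
  proof (rule that[of k])
    show "cyclic_path R (rotate k vs)" by (rule cyclic_path_rotate[OF assms(1)])
    show "Q (hd (rotate k vs))" "Q (last (rotate k vs))" using 2(2,3) by (simp_all add: rot)
  qed
qed

definition set_adj :: "('a \<Rightarrow> 'a \<Rightarrow> bool) \<Rightarrow> 'a set \<Rightarrow> 'a set \<Rightarrow> bool" where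
  "set_adj E S T \<longleftrightarrow> (\<exists>i\<in>S. \<exists>j\<in>T. E i j)"

lemma set_adj_mono: "set_adj E S T \<Longrightarrow> S \<subseteq> S' \<Longrightarrow> T \<subseteq> T' \<Longrightarrow> set_adj E S' T'"
  unfolding set_adj_def by blast

definition extend_cycle :: "'a \<Rightarrow> 'a set list \<Rightarrow> 'a set list" where
  "extend_cycle a ws = ws @ {a} # map (insert a) ws"

lemma set_extend_cycle: "set (extend_cycle a ws) = set ws \<union> insert {a} (insert a ` set ws)"
  unfolding extend_cycle_def by auto

lemma cyclic_path_extend_cycle:
  assumes ws: "cyclic_path (set_adj E) ws" and p: "p \<in> hd ws" "p \<in> last ws"
    and "E p a" "E a p"
  shows "cyclic_path (set_adj E) (extend_cycle a ws)"
proof -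
  have ne: "ws \<noteq> []" and path: "successively (set_adj E) ws"
    and closed: "set_adj E (last ws) (hd ws)"
    using ws unfolding cyclic_path_def by auto
  have "successively (set_adj E) (map (insert a) ws)"
    unfolding successively_map by (rule successively_mono[OF path]) (auto intro: set_adj_mono)
  moreover have "set_adj E (last ws) {a}" "set_adj E {a} (insert a (hd ws))"
    using p \<open>E p a\<close> \<open>E a p\<close> unfolding set_adj_def by auto
  moreover have "set_adj E (insert a (last ws)) (hd ws)"
    using closed by (rule set_adj_mono) auto
  ultimately show ?thesis
    using ne path unfolding cyclic_path_def extend_cycle_def
    by (auto simp: successively_append_iff successively_Cons hd_map last_map)
qed

lemma distinct_extend_cycle:
  assumes "distinct ws" "\<And>X. X \<in> set ws \<Longrightarrow> a \<notin> X \<and> X \<noteq> {}"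
  shows "distinct (extend_cycle a ws)"
proof -
  have "inj_on (insert a) (set ws)"
    using assms(2) by (intro inj_onI) (metis Diff_insert_absorb)
  then show ?thesis using assms by (auto simp: extend_cycle_def distinct_map)
qed

lemma card_nonempty_subsets_less:
  assumes "finite U" "p \<in> U"
  shows "card (Pow U - {{}}) < 2 * card {X \<in> Pow U. p \<in> X}"
proof -
  have "{X \<in> Pow U. p \<in> X} = insert p ` Pow (U - {p})"
  proof (intro equalityI subsetI)
    fix X assume "X \<in> {X \<in> Pow U. p \<in> X}"
    then show "X \<in> insert p ` Pow (U - {p})" by (intro image_eqI[of _ _ "X - {p}"]) auto
  qed (use assms(2) in auto)
  moreover have "inj_on (insert p) (Pow (U - {p}))"
    unfolding inj_on_def by (metis Diff_insert_absorb PowD in_mono Diff_iff singletonI)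
  ultimately have "card {X \<in> Pow U. p \<in> X} = 2 ^ (card U - 1)"
    using assms by (simp add: card_image card_Pow)
  moreover have "card (Pow U - {{}}) = 2 ^ card U - 1"
    using assms(1) by (simp add: card_Pow)
  moreover obtain c where "card U = Suc c"
    using assms by (metis card_0_eq empty_iff not0_implies_Suc)
  ultimately show ?thesis by simp
qed

lemma less_fib_add_2: "n < fib (n + 2)"
proof (induction n)
  case (Suc n)
  have "fib (Suc n + 2) = fib (n + 2) + fib (n + 1)"
    by (simp add: numeral_2_eq_2)
  then show ?case using Suc fib_neq_0_nat[of "n + 1"] by simp
qed simp

lemma exists_fib_partner:
  assumes "k \<ge> 3"
  obtains p where "0 < p" "p < k" "p + k \<in> fib_numbers"
proof -
  define m where "m = (LEAST m. k < fib m)"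
  have k_less: "k < fib m"
    unfolding m_def by (rule LeastI[of _ "k + 2"]) (rule less_fib_add_2)
  have "fib 4 = 3" by (simp add: numeral_eq_Suc)
  then have "\<not> m \<le> 4" using fib_mono[of m 4] k_less assms by linarith
  then obtain i where i: "m = Suc (Suc (Suc i))" "i \<ge> 2"
    by (intro that[of "m - 3"]) auto
  have "\<not> k < fib (Suc (Suc i))"
    unfolding m_def by (rule not_less_Least) (simp add: i m_def[symmetric])
  moreover have "fib (Suc i) < fib (Suc (Suc i))"
    using fib_neq_0_nat[of i] i(2) by simp
  ultimately have "fib m < 2 * k" using i(1) by simp
  then show thesis
    using that[of "fib m - k"] k_less by (simp add: fib_numbers_def)
qed

definition fib_sum_pair :: "nat \<Rightarrow> nat \<Rightarrow> bool" where
  "fib_sum_pair i j \<longleftrightarrow> i \<noteq> j \<and> i + j \<in> fib_numbers"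

lemma fib_sum_pair_commute: "fib_sum_pair i j \<longleftrightarrow> fib_sum_pair j i"
  unfolding fib_sum_pair_def by (auto simp: add.commute)

lemma fsg_edge_mult_pos:
  assumes "finite S" "finite T" "set_adj fib_sum_pair S T"
  shows "1 \<le> fsg_edge_mult S T"
proof -
  let ?E = "{(i, j). i \<in> S \<and> j \<in> T \<and> i \<noteq> j \<and> i + j \<in> fib_numbers}"
  have "finite ?E" using assms(1,2) by (rule finite_subset[rotated, OF finite_cartesian_product]) auto
  moreover have "?E \<noteq> {}" using assms(3) unfolding set_adj_def fib_sum_pair_def by auto
  ultimately show ?thesis unfolding fsg_edge_mult_def by (simp add: Suc_le_eq card_gt_0_iff)
qed

lemma fsg_vertices_eq: "fsg_vertices n = Pow {1..n} - {{}}"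
  unfolding fsg_vertices_def by auto

lemma fsg_vertices_not_Suc: "X \<in> fsg_vertices n \<Longrightarrow> Suc n \<notin> X \<and> X \<noteq> {}"
  unfolding fsg_vertices_def by auto

lemma fsg_vertices_Suc:
  "fsg_vertices (Suc n) = fsg_vertices n \<union> insert {Suc n} (insert (Suc n) ` fsg_vertices n)"
proof -
  have "{1..Suc n} = insert (Suc n) {1..n}" by auto
  then show ?thesis
    unfolding fsg_vertices_eq by (auto simp: Pow_insert image_iff)
qed

lemma fsg_cycle_Suc:
  assumes "n \<ge> 2" and vs: "cyclic_path (set_adj fib_sum_pair) vs" "distinct vs"
    "set vs = fsg_vertices n"
  obtains us where "cyclic_path (set_adj fib_sum_pair) us" "distinct us"
    "set us = fsg_vertices (Suc n)"
proof -
  obtain p where p: "0 < p" "p < Suc n" "p + Suc n \<in> fib_numbers"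
    using exists_fib_partner[of "Suc n"] assms(1) by auto
  have "{X \<in> fsg_vertices n. p \<in> X} = {X \<in> Pow {1..n}. p \<in> X}"
    unfolding fsg_vertices_eq by auto
  then have "card (fsg_vertices n) < 2 * card {X \<in> fsg_vertices n. p \<in> X}"
    using card_nonempty_subsets_less[of "{1..n}" p] p unfolding fsg_vertices_eq by simp
  then have "length vs < 2 * length (filter (\<lambda>X. p \<in> X) vs)"
    using vs(2,3) by (metis distinct_card distinct_filter set_filter)
  then obtain k where rot: "cyclic_path (set_adj fib_sum_pair) (rotate k vs)"
    "p \<in> hd (rotate k vs)" "p \<in> last (rotate k vs)"
    using cyclic_path_rotation_ends[OF vs(1)] by blast
  define ws where "ws = rotate k vs"
  have ws: "cyclic_path (set_adj fib_sum_pair) ws" "p \<in> hd ws" "p \<in> last ws"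
    "distinct ws" "set ws = fsg_vertices n"
    using rot vs(2,3) by (simp_all add: ws_def)
  have "fib_sum_pair p (Suc n)"
    using p unfolding fib_sum_pair_def by simp
  then have "fib_sum_pair (Suc n) p"
    by (simp add: fib_sum_pair_commute)
  show thesis
  proof (rule that[of "extend_cycle (Suc n) ws"])
    show "cyclic_path (set_adj fib_sum_pair) (extend_cycle (Suc n) ws)"
      by (rule cyclic_path_extend_cycle) fact+
    show "distinct (extend_cycle (Suc n) ws)"
      using ws(5) by (intro distinct_extend_cycle[OF ws(4)]) (simp add: fsg_vertices_not_Suc)
    show "set (extend_cycle (Suc n) ws) = fsg_vertices (Suc n)"
      by (simp add: set_extend_cycle ws(5) fsg_vertices_Suc)
  qed
qed

lemma fsg_cycle:
  "n \<ge> 2 \<Longrightarrow> \<exists>vs. cyclic_path (set_adj fib_sum_pair) vs \<and> distinct vs \<and> set vs = fsg_vertices n"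
proof (induction n rule: nat_induct_at_least)
  case base
  have "1 + 2 = fib 4" by (simp add: numeral_eq_Suc)
  then have "fib_sum_pair 1 2"
    unfolding fib_sum_pair_def fib_numbers_def by (simp add: rangeI)
  moreover have "fib_sum_pair 2 1"
    using calculation by (simp add: fib_sum_pair_commute)
  ultimately have "cyclic_path (set_adj fib_sum_pair) [{1}, {2}, {1, 2}]"
    unfolding cyclic_path_def set_adj_def by auto
  moreover have "fsg_vertices 2 = set [{1}, {2}, {1, 2}]"
    unfolding fsg_vertices_eq by (auto simp: Pow_insert numeral_2_eq_2 atLeastAtMostSuc_conv)
  ultimately show ?case by (intro exI[of _ "[{1}, {2}, {1, 2}]"]) simp
next
  case (Suc n)
  then show ?case using fsg_cycle_Suc by metis
qed

theorem corollary2p3: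
  fixes n :: nat
  assumes "n \<ge> 1"
  shows "hamiltonian_multigraph (fsg_vertices n) fsg_edge_mult"
proof (cases "n = 1")
  case True
  have "fsg_vertices 1 = set [{1}]" unfolding fsg_vertices_def by auto
  then show ?thesis unfolding hamiltonian_multigraph_def True by (intro exI[of _ "[{1}]"]) simp
next
  case False
  then obtain vs where vs: "cyclic_path (set_adj fib_sum_pair) vs" "distinct vs"
    "set vs = fsg_vertices n"
    using fsg_cycle[of n] assms by auto
  have "{{1}, {2}, {1, 2}} \<subseteq> set vs" using vs(3) False assms by (auto simp: fsg_vertices_def)
  then have "card {{1::nat}, {2}, {1, 2}} \<le> length vs"
    unfolding distinct_card[OF vs(2), symmetric] by (rule card_mono[OF finite_set])
  then have len: "3 \<le> length vs" by simp
  have "\<And>X. X \<in> set vs \<Longrightarrow> finite X" using vs(3) by (auto simp: fsg_vertices_eq finite_subset)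
  then have "hamiltonian_multigraph (set vs) fsg_edge_mult"
    by (intro hamiltonian_multigraph_if_cyclic_path[OF vs(1,2) len] fsg_edge_mult_pos) auto
  then show ?thesis using vs(3) by simp
qed

end
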